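(* Let $X$ be a real Banach space. Consider: (1) $X$ is LUR. (2) $d(Q_{S_X}(x,\frac1n),Q_{S_X}(x',\frac1n))\to\|x-x'\|$ for every $x,x'\in S_X$. (3) $d(Q_{S_X}(x,\frac1n),Q_{S_X}(-x,\frac1n))\to2$ for every $x\in S_X$. Then $(1)\Rightarrow(2)\Rightarrow(3)$.
   Context: $B_X,S_X$ are the closed unit ball and unit sphere of $X$. For non-empty bounded $F$, $x\in X$, $\delta\ge0$: $r(F,x)=\sup_{y\in F}\|x-y\|$, $Q_F(x,\delta)=\{y\in F:\|x-y\|\ge r(F,x)-\delta\}$. For non-empty sets $A,B$, $d(A,B)=\inf\{\|a-b\|:a\in A,b\in B\}$. $X$ is LUR if $x_n\to x$ whenever $x\in S_X$, $(x_n)\subseteq S_X$ and $\|\frac{x_n+x}{2}\|\to1$. *)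

theory Defs
  imports "HOL-Analysis.Analysis"
begin

definition farthest_radius :: "'a::real_normed_vector set \<Rightarrow> 'a \<Rightarrow> real" where
  "farthest_radius F x = (SUP y\<in>F. norm (x - y))"

definition Qset :: "'a::real_normed_vector set \<Rightarrow> 'a \<Rightarrow> real \<Rightarrow> 'a set" where
  "Qset F x \<delta> = {y \<in> F. norm (x - y) \<ge> farthest_radius F x - \<delta>}"

definition set_dist :: "'a::real_normed_vector set \<Rightarrow> 'a set \<Rightarrow> real" where
  "set_dist A B = Inf {norm (a - b) | a b. a \<in> A \<and> b \<in> B}"

definition LUR :: "'a::real_normed_vector itself \<Rightarrow> bool" where
  "LUR _ \<longleftrightarrow> (\<forall>x::'a. \<forall>xs::nat \<Rightarrow> 'a.
      x \<in> sphere 0 1 \<longrightarrow> (\<forall>n. xs n \<in> sphere 0 1) \<longrightarrow>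
      (\<lambda>n. norm ((xs n + x) /\<^sub>R 2)) \<longlonglongrightarrow> 1 \<longrightarrow> xs \<longlonglongrightarrow> x)"

end

theory Submission
  imports Defs
begin

text \<open>Every point of the unit sphere lies at distance at most 2 from \<open>x\<close>, with equality at \<open>-x\<close>.
  If \<open>y\<close> is a point of the sphere at distance almost 2 from \<open>x\<close>, then \<open>(y + (-x))/2\<close> has norm
  almost 1, so local uniform rotundity at \<open>-x\<close> forces \<open>y\<close> to be close to \<open>-x\<close>. Hence the
  sets \<open>Q(x, 1/n)\<close> shrink to \<open>{-x}\<close>, and the distance between \<open>Q(x, 1/n)\<close> and \<open>Q(x', 1/n)\<close>
  tends to \<open>\<parallel>-x - (-x')\<parallel> = \<parallel>x - x'\<parallel>\<close>. Statement (3) is (2) for \<open>x' = -x\<close>.\<close>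

lemma set_dist_le_norm_diff:
  fixes a b :: "'a::real_normed_vector"
  assumes "a \<in> A" "b \<in> B"
  shows "set_dist A B \<le> norm (a - b)"
  unfolding set_dist_def using assms by (intro cInf_lower bdd_belowI[of _ 0]) auto

lemma set_dist_approx:
  fixes a b :: "'a::real_normed_vector"
  assumes "a \<in> A" "b \<in> B" "e > 0"
  obtains a' b' where "a' \<in> A" "b' \<in> B" "norm (a' - b') < set_dist A B + e"
proof -
  have "{norm (a - b) | a b. a \<in> A \<and> b \<in> B} \<noteq> {}" using assms by blast
  from cInf_lessD[OF this, of "set_dist A B + e"] assms(3) show ?thesis
    using that unfolding set_dist_def by auto
qed

lemma set_dist_tendsto_norm_diff:
  fixes a b :: "'a::real_normed_vector"
  assumes a: "\<And>n. a \<in> A n" and b: "\<And>n. b \<in> B n"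
    and A_shrinks: "\<And>\<alpha>. (\<And>n. \<alpha> n \<in> A n) \<Longrightarrow> \<alpha> \<longlonglongrightarrow> a"
    and B_shrinks: "\<And>\<beta>. (\<And>n. \<beta> n \<in> B n) \<Longrightarrow> \<beta> \<longlonglongrightarrow> b"
  shows "(\<lambda>n. set_dist (A n) (B n)) \<longlonglongrightarrow> norm (a - b)"
proof -
  have "\<exists>a' b'. a' \<in> A n \<and> b' \<in> B n \<and> norm (a' - b') < set_dist (A n) (B n) + 1 / Suc n"
    for n
    by (rule set_dist_approx[OF a b, of "1 / Suc n"]) auto
  then obtain \<alpha> \<beta> where \<alpha>: "\<And>n. \<alpha> n \<in> A n" and \<beta>: "\<And>n. \<beta> n \<in> B n"
    and near_inf: "\<And>n. norm (\<alpha> n - \<beta> n) < set_dist (A n) (B n) + 1 / Suc n"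
    by metis
  have "(\<lambda>n. norm (\<alpha> n - \<beta> n) - 1 / Suc n) \<longlonglongrightarrow> norm (a - b) - 0"
    using A_shrinks[OF \<alpha>] B_shrinks[OF \<beta>] LIMSEQ_inverse_real_of_nat
    by (intro tendsto_intros) (simp_all add: inverse_eq_divide)
  then have lower_lim: "(\<lambda>n. norm (\<alpha> n - \<beta> n) - 1 / Suc n) \<longlonglongrightarrow> norm (a - b)"
    by simp
  have lower: "\<forall>n. norm (\<alpha> n - \<beta> n) - 1 / Suc n \<le> set_dist (A n) (B n)"
    using near_inf by (simp add: less_imp_le algebra_simps)
  have upper: "\<forall>n. set_dist (A n) (B n) \<le> norm (a - b)"
    using set_dist_le_norm_diff[OF a b] by blast
  show ?thesis
    by (rule real_tendsto_sandwich[OF always_eventually[OF lower] always_eventually[OF upper]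
          lower_lim tendsto_const])
qed

lemma norm_diff_antipode:
  fixes x :: "'a::real_normed_vector"
  assumes "norm x = 1"
  shows "norm (x - -x) = 2"
  using assms by (simp add: scaleR_2[symmetric])

lemma farthest_radius_sphere:
  fixes x :: "'a::real_normed_vector"
  assumes "norm x = 1"
  shows "farthest_radius (sphere 0 1) x = 2"
  unfolding farthest_radius_def
proof (rule antisym)
  have bound: "norm (x - y) \<le> 2" if "y \<in> sphere 0 1" for y
    using that assms norm_triangle_ineq4[of x y] by simp
  show "(SUP y\<in>sphere 0 1. norm (x - y)) \<le> 2"
    using assms bound by (intro cSUP_least) auto
  have "norm (x - -x) = 2"
    using assms by (rule norm_diff_antipode)
  moreover have "-x \<in> sphere 0 1" using assms by simp
  ultimately show "2 \<le> (SUP y\<in>sphere 0 1. norm (x - y))"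
    using bound by (metis bdd_aboveI2 cSUP_upper)
qed

lemma Qset_sphere_iff:
  fixes x y :: "'a::real_normed_vector"
  assumes "norm x = 1"
  shows "y \<in> Qset (sphere 0 1) x \<delta> \<longleftrightarrow> norm y = 1 \<and> 2 - \<delta> \<le> norm (x - y)"
  using farthest_radius_sphere[OF assms] unfolding Qset_def by auto

lemma minus_in_Qset_sphere:
  fixes x :: "'a::real_normed_vector"
  assumes "norm x = 1" "\<delta> \<ge> 0"
  shows "-x \<in> Qset (sphere 0 1) x \<delta>"
  using assms norm_diff_antipode[of x] by (simp add: Qset_sphere_iff)

lemma LUR_Qset_sphere_tendsto_antipode:
  fixes X :: "'a::real_normed_vector itself" and x :: 'a
  assumes "LUR X" "norm x = 1" and y: "\<And>n. y n \<in> Qset (sphere 0 1) x (1 / real n)"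
  shows "y \<longlonglongrightarrow> -x"
proof -
  have y_sphere: "norm (y n) = 1" and far: "2 - 1 / real n \<le> norm (x - y n)" for n
    using y[of n] by (simp_all add: Qset_sphere_iff[OF \<open>norm x = 1\<close>])
  have "(\<lambda>n. 1 - 1 / real n) \<longlonglongrightarrow> 1 - 0"
    by (intro tendsto_intros)
  then have lower_lim: "(\<lambda>n. 1 - 1 / real n) \<longlonglongrightarrow> 1"
    by simp
  have lower: "\<forall>n. 1 - 1 / real n \<le> norm ((y n + -x) /\<^sub>R 2)"
  proof
    fix n
    have "norm ((y n + -x) /\<^sub>R 2) = norm (x - y n) / 2"
      by (simp add: norm_minus_commute)
    moreover have "0 \<le> 1 / real n"
      by simp
    ultimately show "1 - 1 / real n \<le> norm ((y n + -x) /\<^sub>R 2)"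
      using far[of n] by linarith
  qed
  have upper: "\<forall>n. norm ((y n + -x) /\<^sub>R 2) \<le> 1"
    using norm_triangle_ineq[of "y n" "-x" for n] y_sphere \<open>norm x = 1\<close> by simp
  have "(\<lambda>n. norm ((y n + -x) /\<^sub>R 2)) \<longlonglongrightarrow> 1"
    by (rule real_tendsto_sandwich[OF always_eventually[OF lower] always_eventually[OF upper]
          lower_lim tendsto_const])
  moreover have "-x \<in> sphere 0 1" "\<forall>n. y n \<in> sphere 0 1"
    using \<open>norm x = 1\<close> y_sphere by simp_all
  ultimately show ?thesis
    using \<open>LUR X\<close> unfolding LUR_def by blast
qed

lemma LUR_set_dist_Qset_sphere_tendsto:
  fixes X :: "'a::real_normed_vector itself" and x x' :: 'a
  assumes "LUR X" "norm x = 1" "norm x' = 1"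
  shows "(\<lambda>n. set_dist (Qset (sphere 0 1) x (1 / real n)) (Qset (sphere 0 1) x' (1 / real n)))
           \<longlonglongrightarrow> norm (x - x')"
proof -
  have "(\<lambda>n. set_dist (Qset (sphere 0 1) x (1 / real n)) (Qset (sphere 0 1) x' (1 / real n)))
           \<longlonglongrightarrow> norm (-x - -x')"
  proof (rule set_dist_tendsto_norm_diff)
    show "-x \<in> Qset (sphere 0 1) x (1 / real n)" "-x' \<in> Qset (sphere 0 1) x' (1 / real n)" for n
      using assms(2,3) by (simp_all add: minus_in_Qset_sphere)
    show "\<alpha> \<longlonglongrightarrow> -x" if "\<And>n. \<alpha> n \<in> Qset (sphere 0 1) x (1 / real n)" for \<alpha>
      using assms(1,2) that by (rule LUR_Qset_sphere_tendsto_antipode)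
    show "\<beta> \<longlonglongrightarrow> -x'" if "\<And>n. \<beta> n \<in> Qset (sphere 0 1) x' (1 / real n)" for \<beta>
      using assms(1,3) that by (rule LUR_Qset_sphere_tendsto_antipode)
  qed
  then show ?thesis
    by (simp add: norm_minus_commute)
qed

theorem theorem3p13:
  fixes X :: "'a::banach itself"
  shows "(LUR X \<longrightarrow>
          (\<forall>x::'a\<in>sphere 0 1. \<forall>x'\<in>sphere 0 1.
             (\<lambda>n. set_dist (Qset (sphere 0 1) x (1 / real n)) (Qset (sphere 0 1) x' (1 / real n)))
               \<longlonglongrightarrow> norm (x - x')))
       \<and> ((\<forall>x::'a\<in>sphere 0 1. \<forall>x'\<in>sphere 0 1.
             (\<lambda>n. set_dist (Qset (sphere 0 1) x (1 / real n)) (Qset (sphere 0 1) x' (1 / real n)))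
               \<longlonglongrightarrow> norm (x - x'))
          \<longrightarrow> (\<forall>x::'a\<in>sphere 0 1.
             (\<lambda>n. set_dist (Qset (sphere 0 1) x (1 / real n)) (Qset (sphere 0 1) (-x) (1 / real n)))
               \<longlonglongrightarrow> 2))"
proof (intro conjI impI ballI)
  fix x x' :: 'a
  assume "LUR X" "x \<in> sphere 0 1" "x' \<in> sphere 0 1"
  then show "(\<lambda>n. set_dist (Qset (sphere 0 1) x (1 / real n)) (Qset (sphere 0 1) x' (1 / real n)))
               \<longlonglongrightarrow> norm (x - x')"
    by (simp add: LUR_set_dist_Qset_sphere_tendsto)
next
  fix x :: 'a
  assume "\<forall>x::'a\<in>sphere 0 1. \<forall>x'\<in>sphere 0 1.
             (\<lambda>n. set_dist (Qset (sphere 0 1) x (1 / real n)) (Qset (sphere 0 1) x' (1 / real n)))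
               \<longlonglongrightarrow> norm (x - x')"
    and x: "x \<in> sphere 0 1"
  moreover have "-x \<in> sphere 0 1"
    using x by simp
  ultimately have "(\<lambda>n. set_dist (Qset (sphere 0 1) x (1 / real n)) (Qset (sphere 0 1) (-x) (1 / real n)))
               \<longlonglongrightarrow> norm (x - -x)"
    by blast
  moreover have "norm (x - -x) = 2"
    using x by (simp only: mem_sphere_0 norm_diff_antipode)
  ultimately show "(\<lambda>n. set_dist (Qset (sphere 0 1) x (1 / real n)) (Qset (sphere 0 1) (-x) (1 / real n)))
               \<longlonglongrightarrow> 2"
    by metis
qed

end
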